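(* For any two polytopes $P,Q\subseteq\mathbb{R}^n$ we have $\mathrm{Sh}(P+Q)=\mathrm{Sh}(P)+\mathrm{Sh}(Q)$. Consequently $P\mapsto\mathrm{Sh}(P)$ induces a group homomorphism $\mathrm{Sh}:\mathcal{P}(\mathbb{R}^n)\to\mathcal{P}(\mathbb{R}^n)$.
   Context: Polytopes are convex hulls of nonempty finite sets; $P+Q$ is the Minkowski sum and $\mathcal{P}(\mathbb{R}^n)$ the Grothendieck group of polytopes. For $S\subseteq\mathbb{R}^n$, $\mathrm{hull}(S)$ is its convex hull and $h(S)=\min\{x_n: x\in S\}$ its height. For $t\in\mathbb{R}$, $c_t:\mathbb{R}^n\to\mathbb{R}^n$, $(x_1,\dots,x_n)\mapsto(x_1,\dots,x_{n-1},t)$. The shadow of a polytope $P$ is $\mathrm{Sh}(P)=\mathrm{hull}(P\cup c_{h(P)}(P))$. *)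

theory Defs
  imports "HOL-Analysis.Analysis"
begin

text \<open>Points of R^n are vectors real^'n; the index type 'n is finite and linearly
ordered, its greatest element playing the role of the last coordinate n.\<close>

definition last_idx :: "'n::{finite,linorder}" where
  "last_idx = Max (UNIV :: 'n set)"

definition polytope :: "(real ^ 'n) set \<Rightarrow> bool" where
  "polytope P \<longleftrightarrow> (\<exists>S. finite S \<and> S \<noteq> {} \<and> P = convex hull S)"

definition height :: "(real ^ 'n::{finite,linorder}) set \<Rightarrow> real" where
  "height S = Inf ((\<lambda>x. x $ last_idx) ` S)"

definition cproj :: "real \<Rightarrow> (real ^ 'n::{finite,linorder}) \<Rightarrow> real ^ 'n::{finite,linorder}" where
  "cproj t x = (\<chi> i. if i = last_idx then t else x $ i)"

definition shadow :: "(real ^ 'n::{finite,linorder}) set \<Rightarrow> (real ^ 'n::{finite,linorder}) set" where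
  "shadow P = convex hull (P \<union> cproj (height P) ` P)"

end

theory Submission
  imports Defs
begin

text \<open>Both shadows are convex hulls, and by \<open>convex_hull_set_plus\<close> the right-hand side is the
hull of the sums of generators of \<open>Sh(P)\<close> and \<open>Sh(Q)\<close>. Heights add under Minkowski sums and
\<open>c\<^sub>s\<^sub>+\<^sub>t(x + y) = c\<^sub>s(x) + c\<^sub>t(y)\<close>, so the only such sums that are not generators of \<open>Sh(P+Q)\<close>
are the mixed points \<open>x + c\<^sub>t(y)\<close>; each of them lies on the vertical segment from \<open>x + y\<close> down
to \<open>c\<^sub>s\<^sub>+\<^sub>t(x + y)\<close>. Additivity of \<open>Sh\<close> on polytopes then makes it respect the relation
\<open>P\<^sub>1 + Q\<^sub>2 = P\<^sub>2 + Q\<^sub>1\<close> defining the Grothendieck group.\<close>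

lemma cproj_add: "cproj (s + t) (x + y) = cproj s x + cproj t (y::real^'n::{finite,linorder})"
  by (simp add: cproj_def vec_eq_iff)

lemma add_cproj_in_closed_segment:
  fixes x y :: "real^'n::{finite,linorder}"
  assumes "s \<le> x $ last_idx" "t \<le> y $ last_idx"
  shows "x + cproj t y \<in> closed_segment (x + y) (cproj (s + t) (x + y))"
proof -
  define d where "d = x $ last_idx + y $ last_idx - s - t"
  define u where "u = (if d = 0 then 0 else (y $ last_idx - t) / d)"
  have "0 \<le> u \<and> u \<le> 1"
    using assms by (auto simp: u_def d_def divide_simps)
  moreover have "u * d = y $ last_idx - t"
    using assms by (auto simp: u_def d_def)
  then have "x + cproj t y = (1 - u) *\<^sub>R (x + y) + u *\<^sub>R cproj (s + t) (x + y)"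
    by (auto simp: vec_eq_iff cproj_def d_def algebra_simps)
  ultimately show ?thesis
    unfolding closed_segment_def by blast
qed

lemma polytope_compact_nonempty: "polytope P \<Longrightarrow> compact P \<and> P \<noteq> {}"
  unfolding polytope_def by (auto simp: compact_convex_hull finite_imp_compact)

lemma compact_attains_height:
  fixes P :: "(real ^ 'n::{finite,linorder}) set"
  assumes "compact P" "P \<noteq> {}"
  obtains x where "x \<in> P" "height P = x $ last_idx" "\<And>y. y \<in> P \<Longrightarrow> x $ last_idx \<le> y $ last_idx"
proof -
  have "continuous_on P (\<lambda>x. x $ last_idx)"
    by (intro continuous_intros)
  then obtain x where x: "x \<in> P" "\<forall>y\<in>P. x $ last_idx \<le> y $ last_idx"
    using continuous_attains_inf assms by blast
  moreover have "height P = x $ last_idx"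
    unfolding height_def by (rule cInf_eq_minimum) (use x in auto)
  ultimately show thesis
    using that by blast
qed

lemma height_le:
  assumes "compact P" "y \<in> P"
  shows "height P \<le> y $ last_idx"
  using compact_attains_height[OF assms(1)] assms(2) by (metis empty_iff)

lemma height_set_plus:
  fixes P Q :: "(real ^ 'n::{finite,linorder}) set"
  assumes "compact P" "P \<noteq> {}" "compact Q" "Q \<noteq> {}"
  shows "height (P + Q) = height P + height Q"
proof -
  obtain x where x: "x \<in> P" "height P = x $ last_idx"
    using compact_attains_height[OF assms(1,2)] by blast
  obtain y where y: "y \<in> Q" "height Q = y $ last_idx"
    using compact_attains_height[OF assms(3,4)] by blast
  have "Inf ((\<lambda>x. x $ last_idx) ` (P + Q)) = height P + height Q"
  proof (rule cInf_eq_minimum)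
    show "height P + height Q \<in> (\<lambda>x. x $ last_idx) ` (P + Q)"
      using x y by (metis image_eqI set_plus_intro vector_add_component)
  next
    fix w assume "w \<in> (\<lambda>x. x $ last_idx) ` (P + Q)"
    then show "height P + height Q \<le> w"
      using height_le assms by (fastforce elim!: set_plus_elim intro: add_mono)
  qed
  then show ?thesis
    by (simp add: height_def)
qed

lemma add_cproj_in_shadow_set_plus:
  fixes P Q :: "(real ^ 'n::{finite,linorder}) set"
  assumes "compact P" "P \<noteq> {}" "compact Q" "Q \<noteq> {}" "x \<in> P" "y \<in> Q"
  shows "x + cproj (height Q) y \<in> shadow (P + Q)"
proof -
  let ?G = "(P + Q) \<union> cproj (height (P + Q)) ` (P + Q)"
  have "x + y \<in> ?G" "cproj (height P + height Q) (x + y) \<in> ?G"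
    using assms height_set_plus[OF assms(1-4)] by (auto intro: set_plus_intro)
  then have "closed_segment (x + y) (cproj (height P + height Q) (x + y)) \<subseteq> shadow (P + Q)"
    unfolding shadow_def by (meson closed_segment_subset convex_convex_hull hull_inc)
  moreover have "x + cproj (height Q) y
      \<in> closed_segment (x + y) (cproj (height P + height Q) (x + y))"
    using assms by (intro add_cproj_in_closed_segment height_le)
  ultimately show ?thesis
    by blast
qed

lemma shadow_set_plus:
  fixes P Q :: "(real ^ 'n::{finite,linorder}) set"
  assumes P: "compact P" "P \<noteq> {}" and Q: "compact Q" "Q \<noteq> {}"
  shows "shadow (P + Q) = shadow P + shadow Q"
proof
  let ?c = "cproj (height P + height Q)"
  have "(P + Q) \<union> ?c ` (P + Q) \<subseteq> (P \<union> cproj (height P) ` P) + (Q \<union> cproj (height Q) ` Q)"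
    by (fastforce elim!: set_plus_elim simp: cproj_add intro: set_plus_intro)
  then show "shadow (P + Q) \<subseteq> shadow P + shadow Q"
    unfolding shadow_def convex_hull_set_plus[symmetric] height_set_plus[OF P Q] by (rule hull_mono)
next
  have "a + b \<in> shadow (P + Q)"
    if a: "a \<in> P \<union> cproj (height P) ` P" and b: "b \<in> Q \<union> cproj (height Q) ` Q" for a b
  proof -
    have "a + b \<in> (P + Q) \<union> cproj (height (P + Q)) ` (P + Q)" if "a \<in> P" "b \<in> Q"
      using that by (auto intro: set_plus_intro)
    moreover have "a + b \<in> cproj (height (P + Q)) ` (P + Q)"
      if "a \<in> cproj (height P) ` P" "b \<in> cproj (height Q) ` Q"
      using that by (auto simp: height_set_plus[OF P Q] cproj_add[symmetric] intro: set_plus_intro)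
    moreover have "a + b \<in> shadow (P + Q)" if "a \<in> P" "b \<in> cproj (height Q) ` Q"
      using that add_cproj_in_shadow_set_plus[OF P Q] by blast
    moreover have "a + b \<in> shadow (P + Q)" if "a \<in> cproj (height P) ` P" "b \<in> Q"
      using that add_cproj_in_shadow_set_plus[OF Q P] by (auto simp: add.commute)
    ultimately show ?thesis
      using a b unfolding shadow_def by (blast intro: hull_inc)
  qed
  then have "(P \<union> cproj (height P) ` P) + (Q \<union> cproj (height Q) ` Q) \<subseteq> shadow (P + Q)"
    by (auto elim!: set_plus_elim)
  then show "shadow P + shadow Q \<subseteq> shadow (P + Q)"
    unfolding shadow_def convex_hull_set_plus[symmetric] by (rule hull_minimal) simp
qed

theorem lemma3p2:
  fixes P Q :: "(real ^ 'n::{finite,linorder}) set"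
  assumes "polytope P" and "polytope Q"
  shows "shadow (P + Q) = shadow P + shadow Q
    \<and> (\<forall>P1 Q1 P2 Q2 :: (real ^ 'n::{finite,linorder}) set.
          polytope P1 \<and> polytope Q1 \<and> polytope P2 \<and> polytope Q2 \<and> P1 + Q2 = P2 + Q1
          \<longrightarrow> shadow P1 + shadow Q2 = shadow P2 + shadow Q1)"
proof -
  have shadow_plus: "shadow (A + B) = shadow A + shadow B" if "polytope A" "polytope B"
    for A B :: "(real ^ 'n::{finite,linorder}) set"
    using that polytope_compact_nonempty shadow_set_plus by metis
  then show ?thesis
    using assms by metis
qed

end
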